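(* Let $B$ be a finite Blaschke product of degree $2^n$ and let $g$ be a generator of its group of invariants $\mathcal{G}_B$. Suppose $B=C_n\circ C_{n-1}\circ\cdots\circ C_1$ where each $C_j$ is a Blaschke product of degree $2$. Then for each $j=1,\dots,n-1$, the group of invariants of $C_j\circ\cdots\circ C_1$ is a normal subgroup of index $2$ of the group of invariants of $C_{j+1}\circ C_j\circ\cdots\circ C_1$. Moreover, if $C_1(z)=z\left(\frac{a-z}{1-\overline{a}z}\right)$ with $a\in\mathbb{D}$, then $g^{2^{n-1}}=\varphi_a$, where $\varphi_a(z)=\frac{a-z}{1-\overline{a}z}$.
   Context: A finite Blaschke product of degree $d$ is $B(z)=\gamma\prod_{j=1}^d \frac{z-a_j}{1-\overline{a_j}z}$ with $a_j\in\mathbb{D}$ and $|\gamma|=1$. For a finite Blaschke product $F$, its group of invariants is $\mathcal{G}_F=\{u:\mathbb{T}\to\mathbb{T}\ \text{continuous} : F\circ u=F\}$, a group under composition (powers $g^m$ denote $m$-fold composition); functions in $\mathcal{G}_F$ and $\varphi_a$ are regarded as maps of the unit circle $\mathbb{T}$. *)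

theory Defs
  imports Complex_Main "HOL-Algebra.Coset" "HOL-Algebra.Generated_Groups"
begin

definition unit_circle :: "complex set" where
  "unit_circle = {z. cmod z = 1}"

definition unit_disc :: "complex set" where
  "unit_disc = {z. cmod z < 1}"

definition blaschke :: "nat \<Rightarrow> (complex \<Rightarrow> complex) \<Rightarrow> bool" where
  "blaschke d B \<longleftrightarrow> (\<exists>\<gamma> (a :: nat \<Rightarrow> complex). cmod \<gamma> = 1 \<and> (\<forall>j<d. a j \<in> unit_disc) \<and>
      (\<forall>z. cmod z \<le> 1 \<longrightarrow> B z = \<gamma> * (\<Prod>j<d. (z - a j) / (1 - cnj (a j) * z))))"

(* group of invariants: continuous self-maps u of the circle with F o u = F on the circle;
   maps of T are represented canonically as functions that are the identity off T *)
definition invariants :: "(complex \<Rightarrow> complex) \<Rightarrow> (complex \<Rightarrow> complex) set" where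
  "invariants F = {u. (\<forall>z\<in>unit_circle. u z \<in> unit_circle) \<and> continuous_on unit_circle u \<and>
      (\<forall>z\<in>unit_circle. F (u z) = F z) \<and> (\<forall>z. z \<notin> unit_circle \<longrightarrow> u z = z)}"

definition inv_group :: "(complex \<Rightarrow> complex) \<Rightarrow> (complex \<Rightarrow> complex) monoid" where
  "inv_group F = \<lparr>carrier = invariants F, mult = (\<circ>), one = id\<rparr>"

definition phi :: "complex \<Rightarrow> complex \<Rightarrow> complex" where
  "phi a z = (a - z) / (1 - cnj a * z)"

primrec chain :: "(nat \<Rightarrow> complex \<Rightarrow> complex) \<Rightarrow> nat \<Rightarrow> complex \<Rightarrow> complex" where
  "chain C 0 = id"
| "chain C (Suc j) = C (Suc j) \<circ> chain C j"

end

theory Submission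
  imports Defs "HOL-Analysis.Analysis" "HOL-Algebra.Multiplicative_Group"
begin

(* A finite Blaschke product F of degree d > 0, and any composition of such, has a lift to the
   universal cover of the circle: a continuous strictly increasing \<theta> with F (cis t) = cis (\<theta> t)
   and \<theta> (t + 2\<pi>) = \<theta> t + 2\<pi>d.  An invariant u of F lifts to some \<psi> with \<theta> \<circ> \<psi> - \<theta> \<in> 2\<pi>\<int>,
   a constant 2\<pi>k by continuity; so the invariants of F are exactly the deck transformations
   t \<mapsto> inv \<theta> (\<theta> t + 2\<pi>k), k \<in> \<int>/d\<int>, and form a cyclic group of order d.
   The invariants of C_j \<circ> ... \<circ> C_1 are invariants of C_(j+1) \<circ> ... \<circ> C_1; in these abelian groups
   of orders 2^j and 2^(j+1) this is a normal subgroup of index 2.  A cyclic group of order 2^n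
   has exactly one involution, which is g^(2^(n-1)) for every generator g; as C_1 z = z \<phi>_a(z) is
   symmetric under the involution \<phi>_a, it is also \<phi>_a. *)

section \<open>Circle maps and their lifts\<close>

lemma cis_eq_cis_iff: "cis a = cis b \<longleftrightarrow> (\<exists>n::int. a = b + 2 * pi * of_int n)"
proof -
  have "cis a = cis b \<longleftrightarrow> sin a = sin b \<and> cos a = cos b"
    by (metis cis.sel complex_eq_iff)
  then show ?thesis by (simp add: sin_cos_eq_iff)
qed

lemma cis_add_int_multiple [simp]: "cis (t + 2 * pi * of_int n) = cis t"
  using cis_eq_cis_iff by blast

lemma cis_Arg_unit_circle:
  assumes "z \<in> unit_circle" shows "cis (Arg z) = z"
proof -
  have "cmod z = 1" "z \<noteq> 0"
    using assms by (auto simp: unit_circle_def)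
  then show ?thesis
    using cis_Arg by (simp add: sgn_eq)
qed

lemma unit_circle_eq_range_cis: "unit_circle = range cis"
proof
  show "unit_circle \<subseteq> range cis"
    by (metis cis_Arg_unit_circle rangeI subsetI)
  show "range cis \<subseteq> unit_circle"
    by (auto simp: unit_circle_def)
qed

lemma cis_in_unit_circle [simp]: "cis t \<in> unit_circle"
  by (simp add: unit_circle_eq_range_cis)

lemma shift_int_multiple:
  fixes f :: "real \<Rightarrow> real"
  assumes shift: "\<And>t. f (t + 2 * pi) = f t + 2 * pi * e"
  shows "f (t + 2 * pi * of_int m) = f t + 2 * pi * e * of_int m"
proof (induction m arbitrary: t rule: int_induct[of _ 0])
  case (step1 i)
  have "f (t + 2 * pi * of_int (i + 1)) = f ((t + 2 * pi * of_int i) + 2 * pi)"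
    by (simp add: algebra_simps)
  also have "\<dots> = f t + 2 * pi * e * of_int i + 2 * pi * e"
    by (simp only: shift step1.IH)
  finally show ?case by (simp add: algebra_simps)
next
  case (step2 i)
  have "f (t + 2 * pi * of_int i) = f ((t + 2 * pi * of_int (i - 1)) + 2 * pi)"
    by (simp add: algebra_simps)
  also have "\<dots> = f (t + 2 * pi * of_int (i - 1)) + 2 * pi * e"
    by (simp only: shift)
  finally show ?case using step2.IH by (simp add: algebra_simps)
qed simp

lemma continuous_on_unit_circle_if_lift:
  assumes h: "continuous_on UNIV h" and V: "\<And>t. V (cis t) = cis (h t)"
  shows "continuous_on unit_circle V"
proof -
  have "continuous (at z0 within unit_circle) V" if "z0 \<in> unit_circle" for z0
  proof -
    define t0 where "t0 = Arg z0"
    have z0: "z0 = cis t0" "z0 \<noteq> 0"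
      using \<open>z0 \<in> unit_circle\<close> cis_Arg_unit_circle unfolding t0_def by (auto simp: unit_circle_def)
    \<comment> \<open>near \<open>z0\<close>, \<open>z \<mapsto> t0 + Arg (z / z0)\<close> is a continuous inverse of \<open>cis\<close>\<close>
    have V_eq: "V z = cis (h (t0 + Arg (z / z0)))" if "z \<in> unit_circle" for z
    proof -
      have "z / z0 \<in> unit_circle"
        using that \<open>z0 \<in> unit_circle\<close> by (simp add: unit_circle_def norm_divide)
      then have "cis (t0 + Arg (z / z0)) = z"
        using z0 by (simp add: cis_Arg_unit_circle flip: cis_mult)
      then show ?thesis
        using V by metis
    qed
    have "isCont Arg (z0 / z0)"
      using z0 by (intro continuous_at_Arg) simp
    then have "isCont (\<lambda>z. Arg (z / z0)) z0"
      using continuous_at_compose[of z0 "\<lambda>z. z / z0" Arg] z0 by (simp add: o_def)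
    then have "isCont (\<lambda>z. t0 + Arg (z / z0)) z0"
      by (intro continuous_intros)
    moreover have "isCont h (t0 + Arg (z0 / z0))"
      using h by (simp add: continuous_on_eq_continuous_at)
    ultimately have "isCont (\<lambda>z. h (t0 + Arg (z / z0))) z0"
      using continuous_at_compose by (fastforce simp: o_def)
    then have "isCont (\<lambda>z. cis (h (t0 + Arg (z / z0)))) z0"
      unfolding continuous_at by (intro tendsto_intros) simp
    then have "continuous (at z0 within unit_circle) (\<lambda>z. cis (h (t0 + Arg (z / z0))))"
      using continuous_at_imp_continuous_within by blast
    then show ?thesis
      by (rule continuous_transform_within[where \<delta>=1]) (use V_eq \<open>z0 \<in> unit_circle\<close> in auto)
  qed
  then show ?thesis
    using continuous_on_eq_continuous_within by blast
qed

lemma continuous_unit_circle_map_lift: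
  assumes "continuous_on unit_circle u" "\<And>z. z \<in> unit_circle \<Longrightarrow> u z \<in> unit_circle"
  obtains \<phi> where "continuous_on UNIV \<phi>" "\<And>t. u (cis t) = cis (\<phi> t)"
proof -
  have cont: "continuous_on UNIV (\<lambda>t. u (cis t))"
    by (rule continuous_on_compose2[OF assms(1)]) (auto intro: continuous_intros)
  have norm1: "cmod (u (cis t)) = 1" for t
    using assms(2)[of "cis t"] by (simp add: unit_circle_def)
  obtain l where l: "continuous_on UNIV l" "\<And>t. u (cis t) = exp (l t)"
  proof (rule continuous_logarithm_on_contractible[OF cont contractible_UNIV])
    show "u (cis t) \<noteq> 0" for t
      using norm1[of t] by (metis norm_zero zero_neq_one)
  qed auto
  have "u (cis t) = cis (Im (l t))" for t
  proof -
    have "Re (l t) = 0"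
      using norm1[of t] l(2)[of t] by (simp add: norm_exp_eq_Re)
    then show ?thesis
      using l(2)[of t] by (simp add: exp_eq_polar)
  qed
  moreover have "continuous_on UNIV (\<lambda>t. Im (l t))"
    using l(1) by (intro continuous_intros)
  ultimately show ?thesis
    using that by blast
qed

lemma continuous_Ints_valued_constant:
  fixes f :: "'a::topological_space \<Rightarrow> real"
  assumes "connected S" "continuous_on S f" "\<And>x. x \<in> S \<Longrightarrow> f x \<in> \<int>"
  shows "f constant_on S"
proof (rule continuous_discrete_range_constant[OF assms(1,2)])
  fix x assume "x \<in> S"
  have "1 \<le> norm (f y - f x)" if "y \<in> S" "f y \<noteq> f x" for y
  proof -
    obtain a b where "f y = of_int a" "f x = of_int b"
      using assms(3) \<open>x \<in> S\<close> \<open>y \<in> S\<close> Ints_cases by metis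
    moreover have "a \<noteq> b"
      using that(2) calculation by auto
    ultimately show ?thesis
      by (simp del: of_int_diff add: of_int_diff[symmetric])
  qed
  then show "\<exists>e>0. \<forall>y. y \<in> S \<and> f y \<noteq> f x \<longrightarrow> e \<le> norm (f y - f x)"
    by (intro exI[of _ 1]) auto
qed

lemma unit_circle_map_eqI:
  assumes "\<And>t. f (cis t) = g (cis t)" "\<And>z. z \<notin> unit_circle \<Longrightarrow> f z = g z"
  shows "f = g"
proof
  fix z show "f z = g z"
    using assms by (cases "z \<in> unit_circle") (auto simp: unit_circle_eq_range_cis)
qed

lemma strict_mono_if_continuous_inj:
  fixes f :: "real \<Rightarrow> real"
  assumes "continuous_on UNIV f" "inj f" "a < b" "f a < f b"
  shows "strict_mono f"
proof -
  have "strict_mono_on UNIV f \<or> strict_antimono_on UNIV f"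
    using injective_eq_monotone_map[of UNIV f] assms(1,2) by simp
  moreover have "\<not> strict_antimono_on UNIV f"
  proof
    assume "strict_antimono_on UNIV f"
    then have "f b < f a"
      using assms(3) by (simp add: monotone_on_def)
    then show False
      using assms(4) by simp
  qed
  ultimately show ?thesis
    by simp
qed

definition circle_lift :: "nat \<Rightarrow> (complex \<Rightarrow> complex) \<Rightarrow> (real \<Rightarrow> real) \<Rightarrow> bool" where
  "circle_lift d F \<theta> \<longleftrightarrow> continuous_on UNIV \<theta> \<and> strict_mono \<theta> \<and>
     (\<forall>t. \<theta> (t + 2 * pi) = \<theta> t + 2 * pi * real d) \<and> (\<forall>t. F (cis t) = cis (\<theta> t))"

lemma circle_liftI:
  assumes cont: "continuous_on UNIV \<theta>" and shift: "\<And>t. \<theta> (t + 2 * pi) = \<theta> t + 2 * pi * real d"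
    and "d > 0" and F: "\<And>t. F (cis t) = cis (\<theta> t)" and "inj_on F unit_circle"
  shows "circle_lift d F \<theta>"
proof -
  have "inj \<theta>"
  proof (rule injI)
    fix s t assume eq: "\<theta> s = \<theta> t"
    then have "F (cis s) = F (cis t)"
      by (simp add: F)
    then have "cis s = cis t"
      by (rule inj_onD[OF \<open>inj_on F unit_circle\<close>]) simp_all
    then obtain n :: int where n: "s = t + 2 * pi * of_int n"
      using cis_eq_cis_iff by blast
    then have "\<theta> s = \<theta> t + 2 * pi * real d * of_int n"
      using shift_int_multiple[of \<theta> "real d" t n] shift by simp
    then show "s = t"
      using eq n \<open>d > 0\<close> by simp
  qed
  moreover have "\<theta> 0 < \<theta> (2 * pi)"
    using shift[of 0] \<open>d > 0\<close> by simp
  ultimately have "strict_mono \<theta>"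
    using strict_mono_if_continuous_inj[OF cont, of 0 "2 * pi"] by simp
  then show ?thesis
    using cont shift F unfolding circle_lift_def by blast
qed

section \<open>Deck transformations\<close>

definition deck :: "(real \<Rightarrow> real) \<Rightarrow> int \<Rightarrow> complex \<Rightarrow> complex" where
  "deck \<theta> k z = (if z \<in> unit_circle then cis (inv_into UNIV \<theta> (\<theta> (Arg z) + 2 * pi * of_int k)) else z)"

lemma inv_group_pow: "x [^]\<^bsub>inv_group F\<^esub> (n::nat) = x ^^ n"
  by (induction n) (simp_all add: inv_group_def funpow_Suc_right del: funpow.simps(2))

locale circle_covering =
  fixes d :: nat and F :: "complex \<Rightarrow> complex" and \<theta> :: "real \<Rightarrow> real"
  assumes circle_lift: "circle_lift d F \<theta>"
begin

lemma continuous_lift: "continuous_on UNIV \<theta>"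
  and strict_mono_lift: "strict_mono \<theta>"
  and lift_shift: "\<And>t. \<theta> (t + 2 * pi) = \<theta> t + 2 * pi * real d"
  and lift_cis: "\<And>t. F (cis t) = cis (\<theta> t)"
  using circle_lift unfolding circle_lift_def by auto

lemma lift_shift_int: "\<theta> (t + 2 * pi * of_int m) = \<theta> t + 2 * pi * real d * of_int m"
  by (rule shift_int_multiple[where f=\<theta>, OF lift_shift])

lemma degree_pos: "d > 0"
proof -
  have "\<theta> 0 < \<theta> (0 + 2 * pi)"
    using strict_mono_lift by (simp add: strict_mono_less)
  then show ?thesis
    using lift_shift[of 0] by (simp add: zero_less_mult_iff)
qed

lemma surj_lift: "surj \<theta>"
proof -
  have "\<exists>t. \<theta> t = y" for y
  proof -
    define m where "m = \<lceil>\<bar>y - \<theta> 0\<bar>\<rceil>"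
    have "0 \<le> m" "\<bar>y - \<theta> 0\<bar> \<le> of_int m"
      unfolding m_def by auto
    moreover have "1 \<le> 2 * pi * real d"
      using degree_pos pi_gt3 by (simp add: mult_ge1_I)
    ultimately have "of_int m \<le> 2 * pi * real d * of_int m"
      using mult_right_mono[of 1 "2 * pi * real d" "of_int m"] by simp
    then have "\<theta> (0 + 2 * pi * of_int (- m)) \<le> y" "y \<le> \<theta> (0 + 2 * pi * of_int m)"
      using lift_shift_int[of 0 m] lift_shift_int[of 0 "- m"] \<open>\<bar>y - \<theta> 0\<bar> \<le> of_int m\<close>
      by auto
    moreover have "0 + 2 * pi * of_int (- m) \<le> 0 + 2 * pi * of_int m"
      using \<open>0 \<le> m\<close> by simp
    ultimately show ?thesis
      using IVT'[OF _ _ _ continuous_on_subset[OF continuous_lift subset_UNIV]] by blast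
  qed
  then show ?thesis
    by (metis surjI)
qed

lemma inv_lift_lift [simp]: "inv_into UNIV \<theta> (\<theta> t) = t"
  using strict_mono_lift by (simp add: strict_mono_imp_inj_on)

lemma lift_inv_lift [simp]: "\<theta> (inv_into UNIV \<theta> y) = y"
  using surj_lift by (simp add: surj_f_inv_f)

lemma inv_lift_eq_iff: "inv_into UNIV \<theta> y = t \<longleftrightarrow> y = \<theta> t"
  by auto

lemma continuous_inv_lift: "continuous_on UNIV (inv_into UNIV \<theta>)"
proof -
  have "isCont (inv_into UNIV \<theta>) (\<theta> (inv_into UNIV \<theta> y))" for y
    using continuous_lift
    by (intro isCont_inverse_function[where f=\<theta> and d=1]) (auto simp: continuous_on_eq_continuous_at)
  then show ?thesis
    by (simp add: continuous_on_eq_continuous_at)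
qed

lemma cis_inv_lift_eq_iff:
  "cis (inv_into UNIV \<theta> y) = cis (inv_into UNIV \<theta> y') \<longleftrightarrow> (\<exists>n::int. y = y' + 2 * pi * real d * of_int n)"
proof -
  have "inv_into UNIV \<theta> y = inv_into UNIV \<theta> y' + 2 * pi * of_int n \<longleftrightarrow> y = y' + 2 * pi * real d * of_int n" for n :: int
    by (simp add: inv_lift_eq_iff lift_shift_int)
  then show ?thesis
    by (simp add: cis_eq_cis_iff)
qed

lemma deck_cis: "deck \<theta> k (cis t) = cis (inv_into UNIV \<theta> (\<theta> t + 2 * pi * of_int k))"
proof -
  have "cis (Arg (cis t)) = cis t"
    by (simp add: cis_Arg_unit_circle)
  then obtain n :: int where "Arg (cis t) = t + 2 * pi * of_int n"
    unfolding cis_eq_cis_iff by blast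
  then have "\<theta> (Arg (cis t)) + 2 * pi * of_int k = (\<theta> t + 2 * pi * of_int k) + 2 * pi * real d * of_int n"
    by (simp add: lift_shift_int)
  then have "cis (inv_into UNIV \<theta> (\<theta> (Arg (cis t)) + 2 * pi * of_int k)) =
      cis (inv_into UNIV \<theta> (\<theta> t + 2 * pi * of_int k))"
    unfolding cis_inv_lift_eq_iff by blast
  then show ?thesis
    by (simp add: deck_def)
qed

lemma deck_in_invariants: "deck \<theta> k \<in> invariants F"
proof -
  have "continuous_on UNIV (\<lambda>t. inv_into UNIV \<theta> (\<theta> t + 2 * pi * of_int k))"
    by (intro continuous_on_compose2[OF continuous_inv_lift] continuous_intros continuous_lift) auto
  then have "continuous_on unit_circle (deck \<theta> k)"
    using continuous_on_unit_circle_if_lift deck_cis by blast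
  moreover have "F (deck \<theta> k z) = F z" if "z \<in> unit_circle" for z
    using that by (auto simp: unit_circle_eq_range_cis deck_cis lift_cis)
  ultimately show ?thesis
    unfolding invariants_def by (auto simp: deck_def)
qed

lemma deck_add: "deck \<theta> k \<circ> deck \<theta> m = deck \<theta> (k + m)"
  by (rule unit_circle_map_eqI) (simp add: deck_cis algebra_simps, simp add: deck_def)

lemma deck_zero: "deck \<theta> 0 = id"
  by (rule unit_circle_map_eqI) (simp add: deck_cis, simp add: deck_def)

lemma deck_eq_iff: "deck \<theta> k = deck \<theta> m \<longleftrightarrow> int d dvd (k - m)"
proof
  assume "deck \<theta> k = deck \<theta> m"
  then have "cis (inv_into UNIV \<theta> (\<theta> 0 + 2 * pi * of_int k)) = cis (inv_into UNIV \<theta> (\<theta> 0 + 2 * pi * of_int m))"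
    by (metis deck_cis)
  then obtain n :: int where "2 * pi * of_int k = 2 * pi * of_int m + 2 * pi * real d * of_int n"
    unfolding cis_inv_lift_eq_iff by auto
  then have "2 * pi * (of_int k - of_int (m + int d * n)) = 0"
    by (simp add: algebra_simps)
  then have "real_of_int k = real_of_int (m + int d * n)"
    by simp
  then have "k = m + int d * n"
    by (simp only: of_int_eq_iff)
  then show "int d dvd (k - m)"
    by simp
next
  assume "int d dvd (k - m)"
  then obtain q where "k = m + int d * q"
    by (metis add_diff_cancel_left' add_diff_eq dvdE)
  then have shift: "\<theta> t + 2 * pi * of_int k = (\<theta> t + 2 * pi * of_int m) + 2 * pi * real d * of_int q" for t
    by (simp add: algebra_simps)
  show "deck \<theta> k = deck \<theta> m"
  proof (intro unit_circle_map_eqI)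
    show "deck \<theta> k (cis t) = deck \<theta> m (cis t)" for t
      unfolding deck_cis cis_inv_lift_eq_iff using shift by blast
  qed (simp add: deck_def)
qed

lemma invariant_imp_deck:
  assumes "u \<in> invariants F"
  shows "\<exists>k. u = deck \<theta> k"
proof -
  have u_circle: "\<And>z. z \<in> unit_circle \<Longrightarrow> u z \<in> unit_circle"
    and u_cont: "continuous_on unit_circle u"
    and u_inv: "\<And>z. z \<in> unit_circle \<Longrightarrow> F (u z) = F z"
    and u_off: "\<And>z. z \<notin> unit_circle \<Longrightarrow> u z = z"
    using assms unfolding invariants_def by auto
  obtain \<phi> where \<phi>_cont: "continuous_on UNIV \<phi>" and \<phi>: "\<And>t. u (cis t) = cis (\<phi> t)"
    using continuous_unit_circle_map_lift[OF u_cont u_circle] by blast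
  define D where "D t = (\<theta> (\<phi> t) - \<theta> t) / (2 * pi)" for t
  have D_Ints: "D t \<in> \<int>" for t
  proof -
    have "cis (\<theta> (\<phi> t)) = cis (\<theta> t)"
      using u_inv[of "cis t"] by (simp add: \<phi> lift_cis)
    then obtain n :: int where "\<theta> (\<phi> t) = \<theta> t + 2 * pi * of_int n"
      unfolding cis_eq_cis_iff by blast
    then show ?thesis
      by (simp add: D_def)
  qed
  have "continuous_on UNIV D"
    unfolding D_def using \<phi>_cont
    by (intro continuous_intros continuous_on_compose2[OF continuous_lift] continuous_lift) auto
  then obtain c where c: "\<And>t. D t = c"
    using continuous_Ints_valued_constant[of UNIV D] D_Ints by (auto simp: constant_on_def)
  then obtain k :: int where "c = of_int k"
    using D_Ints[of 0] by (auto elim: Ints_cases)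
  then have "\<theta> (\<phi> t) = \<theta> t + 2 * pi * of_int k" for t
    using c[of t] by (simp add: D_def field_simps)
  then have "\<phi> t = inv_into UNIV \<theta> (\<theta> t + 2 * pi * of_int k)" for t
    by (metis inv_lift_lift)
  then have "u = deck \<theta> k"
    by (intro unit_circle_map_eqI) (simp add: \<phi> deck_cis, simp add: u_off deck_def)
  then show ?thesis ..
qed

lemma invariants_eq_range_deck: "invariants F = range (deck \<theta>)"
  using invariant_imp_deck deck_in_invariants by blast

lemma invariants_eq_deck_image: "invariants F = deck \<theta> ` {0..<int d}"
proof (intro equalityI subsetI)
  fix u assume "u \<in> invariants F"
  then obtain k where "u = deck \<theta> k"
    using invariant_imp_deck by blast
  moreover have "deck \<theta> k = deck \<theta> (k mod int d)"
    by (simp add: deck_eq_iff minus_mod_eq_mult_div)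
  moreover have "k mod int d \<in> {0..<int d}"
    using degree_pos by simp
  ultimately show "u \<in> deck \<theta> ` {0..<int d}"
    by blast
qed (auto simp: deck_in_invariants)

lemma finite_invariants: "finite (invariants F)"
  by (simp add: invariants_eq_deck_image)

lemma card_invariants: "card (invariants F) = d"
proof -
  have "inj_on (deck \<theta>) {0..<int d}"
  proof (rule inj_onI)
    fix a b assume "a \<in> {0..<int d}" "b \<in> {0..<int d}" "deck \<theta> a = deck \<theta> b"
    then have "a mod int d = b mod int d"
      using deck_eq_iff mod_eq_dvd_iff by blast
    then show "a = b"
      using \<open>a \<in> {0..<int d}\<close> \<open>b \<in> {0..<int d}\<close> by simp
  qed
  then show ?thesis
    by (simp add: invariants_eq_deck_image card_image)
qed

lemma comm_group_inv_group: "comm_group (inv_group F)"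
proof (rule comm_groupI)
  fix x y z
  assume "x \<in> carrier (inv_group F)" "y \<in> carrier (inv_group F)" "z \<in> carrier (inv_group F)"
  then obtain i k m where "x = deck \<theta> i" "y = deck \<theta> k" "z = deck \<theta> m"
    by (auto simp: inv_group_def invariants_eq_range_deck)
  then show "x \<otimes>\<^bsub>inv_group F\<^esub> y \<in> carrier (inv_group F)"
    and "x \<otimes>\<^bsub>inv_group F\<^esub> y = y \<otimes>\<^bsub>inv_group F\<^esub> x"
    and "x \<otimes>\<^bsub>inv_group F\<^esub> y \<otimes>\<^bsub>inv_group F\<^esub> z = x \<otimes>\<^bsub>inv_group F\<^esub> (y \<otimes>\<^bsub>inv_group F\<^esub> z)"
    and "\<one>\<^bsub>inv_group F\<^esub> \<otimes>\<^bsub>inv_group F\<^esub> x = x"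
    and "\<exists>x'\<in>carrier (inv_group F). x' \<otimes>\<^bsub>inv_group F\<^esub> x = \<one>\<^bsub>inv_group F\<^esub>"
    by (auto simp: inv_group_def invariants_eq_range_deck deck_add deck_zero[symmetric] ac_simps
        intro!: exI[of _ "-i"])
next
  show "\<one>\<^bsub>inv_group F\<^esub> \<in> carrier (inv_group F)"
    using deck_in_invariants[of 0] by (simp add: inv_group_def deck_zero)
qed

lemma deck_funpow: "deck \<theta> k ^^ n = deck \<theta> (k * int n)"
  by (induction n) (simp_all add: deck_zero deck_add funpow_Suc_right algebra_simps del: funpow.simps(2))

lemma odd_if_generator:
  assumes "even d" and gen: "generate (inv_group F) {deck \<theta> k} = invariants F"
  shows "odd k"
proof -
  interpret comm_group "inv_group F"
    by (rule comm_group_inv_group)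
  have "deck \<theta> 1 \<in> generate (inv_group F) {deck \<theta> k}"
    using gen deck_in_invariants by simp
  then obtain n :: nat where "deck \<theta> 1 = deck \<theta> k [^]\<^bsub>inv_group F\<^esub> n"
    using generate_pow_on_finite_carrier[of "deck \<theta> k"] finite_invariants deck_in_invariants
    by (auto simp: inv_group_def)
  then have "int d dvd 1 - k * int n"
    by (simp add: inv_group_pow deck_funpow deck_eq_iff)
  moreover have "even (int d)"
    using \<open>even d\<close> by simp
  ultimately have "even (1 - k * int n)"
    using dvd_trans by blast
  then show "odd k"
    by auto
qed

lemma involution_eq_deck_half:
  assumes "d = 2 * p" "u \<in> invariants F" "u \<circ> u = id" "u \<noteq> id"
  shows "u = deck \<theta> (int p)"
proof -
  obtain m where u: "u = deck \<theta> m"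
    using invariant_imp_deck assms(2) by blast
  have "int d dvd m + m"
    using assms(3) unfolding u deck_add by (metis deck_eq_iff deck_zero diff_zero)
  then have "int p dvd m"
    using assms(1) by (simp flip: mult_2)
  then obtain r where m: "m = int p * r" ..
  have "odd r"
  proof
    assume "even r"
    then obtain s where "r = 2 * s" ..
    then have "deck \<theta> m = deck \<theta> 0"
      using assms(1) m by (simp add: deck_eq_iff)
    then show False
      using assms(4) u deck_zero by simp
  qed
  then obtain s where "r = 2 * s + 1" ..
  then have "m - int p = int d * s"
    using assms(1) m by (simp add: algebra_simps)
  then show ?thesis
    by (simp add: u deck_eq_iff)
qed

lemma generator_pow_half:
  assumes "d = 2 * p" "g \<in> invariants F" "generate (inv_group F) {g} = invariants F"
  shows "g ^^ p = deck \<theta> (int p)"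
proof -
  obtain k where g: "g = deck \<theta> k"
    using invariant_imp_deck assms(2) by blast
  then have "odd k"
    using odd_if_generator assms by simp
  then obtain s where "k = 2 * s + 1" ..
  then have "k * int p - int p = int d * s"
    using assms(1) by (simp add: algebra_simps)
  then show ?thesis
    by (simp add: g deck_funpow deck_eq_iff)
qed

end

section \<open>Lifts of Blaschke products\<close>

lemma circle_lift_cong:
  assumes "circle_lift d F \<theta>" "\<And>z. z \<in> unit_circle \<Longrightarrow> G z = F z"
  shows "circle_lift d G \<theta>"
  using assms unfolding circle_lift_def by simp

lemma circle_lift_id: "circle_lift 1 id id"
  by (simp add: circle_lift_def strict_mono_def)

lemma circle_lift_comp:
  assumes F: "circle_lift d F \<theta>" and G: "circle_lift e G \<eta>"
  shows "circle_lift (d * e) (G \<circ> F) (\<eta> \<circ> \<theta>)"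
proof -
  interpret F: circle_covering d F \<theta> by (rule circle_covering.intro[OF F])
  interpret G: circle_covering e G \<eta> by (rule circle_covering.intro[OF G])
  have "\<eta> (\<theta> (t + 2 * pi)) = \<eta> (\<theta> t) + 2 * pi * real (d * e)" for t
  proof -
    have "\<eta> (\<theta> (t + 2 * pi)) = \<eta> (\<theta> t + 2 * pi * of_int (int d))"
      by (simp add: F.lift_shift)
    also have "\<dots> = \<eta> (\<theta> t) + 2 * pi * real e * of_int (int d)"
      by (rule G.lift_shift_int)
    finally show ?thesis
      by simp
  qed
  moreover have "continuous_on UNIV (\<eta> \<circ> \<theta>)"
    using F.continuous_lift G.continuous_lift
    by (metis continuous_on_compose continuous_on_subset top_greatest)
  ultimately show ?thesis
    using F.strict_mono_lift G.strict_mono_lift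
    by (auto simp: circle_lift_def strict_mono_def F.lift_cis G.lift_cis)
qed

lemma circle_lift_mult:
  assumes "circle_lift d F \<theta>" "circle_lift e G \<eta>"
  shows "circle_lift (d + e) (\<lambda>z. F z * G z) (\<lambda>t. \<theta> t + \<eta> t)"
  using assms unfolding circle_lift_def strict_mono_def
  by (auto intro!: continuous_intros add_strict_mono simp: cis_mult algebra_simps)

lemma circle_lift_rotate:
  assumes "cmod \<gamma> = 1" "circle_lift d F \<theta>"
  shows "circle_lift d (\<lambda>z. \<gamma> * F z) (\<lambda>t. \<theta> t + Arg \<gamma>)"
proof -
  have "cis (Arg \<gamma>) = \<gamma>"
    using cis_Arg_unit_circle assms(1) by (simp add: unit_circle_def)
  then have "\<gamma> * cis s = cis (s + Arg \<gamma>)" for s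
    by (metis cis_mult mult.commute)
  then show ?thesis
    using assms(2) unfolding circle_lift_def strict_mono_def by (auto intro!: continuous_intros)
qed

lemma mobius_denom_nonzero:
  assumes "cmod a < 1" "cmod z \<le> 1"
  shows "1 - cnj a * z \<noteq> 0"
proof
  assume "1 - cnj a * z = 0"
  then have "cmod (cnj a * z) = 1"
    by simp
  then have "cmod a * cmod z = 1"
    by (simp add: norm_mult)
  moreover have "cmod a * cmod z \<le> cmod a"
    using assms(2) by (simp add: mult_left_le)
  ultimately show False
    using assms(1) by simp
qed

lemma norm_phi:
  assumes "cmod a < 1" "cmod z = 1"
  shows "cmod (phi a z) = 1"
proof -
  have "z * cnj z = 1"
    using complex_norm_square[of z] assms(2) by simp
  then have "1 - cnj a * z = z * cnj (z - a)"
    by (simp add: algebra_simps)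
  then have "cmod (1 - cnj a * z) = cmod (z - a)"
    using assms(2) by (simp add: norm_mult del: complex_cnj_diff)
  then have "cmod (1 - cnj a * z) = cmod (a - z)"
    by (simp add: norm_minus_commute)
  moreover have "cmod (1 - cnj a * z) \<noteq> 0"
    using mobius_denom_nonzero assms by simp
  ultimately show ?thesis
    by (simp add: phi_def norm_divide)
qed

lemma phi_phi:
  assumes "cmod a < 1" "cmod z \<le> 1"
  shows "phi a (phi a z) = z"
proof -
  define D where "D = 1 - cnj a * z"
  have D: "D \<noteq> 0"
    unfolding D_def using mobius_denom_nonzero assms by simp
  have "cmod a ^ 2 < 1"
    using assms(1) by (simp add: abs_square_less_1)
  then have "complex_of_real (cmod a ^ 2) \<noteq> 1"
    by (metis of_real_eq_1_iff less_irrefl)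
  then have K: "1 - a * cnj a \<noteq> 0"
    using complex_norm_square[of a] by simp
  have phi_z: "phi a z = (a - z) / D"
    by (simp add: phi_def D_def)
  have "a - phi a z = (a * D - (a - z)) / D" "1 - cnj a * phi a z = (D - cnj a * (a - z)) / D"
    unfolding phi_z using D by (simp_all add: field_simps)
  moreover have "a * D - (a - z) = z * (1 - a * cnj a)" "D - cnj a * (a - z) = 1 - a * cnj a"
    unfolding D_def by (simp_all add: algebra_simps)
  ultimately show ?thesis
    using D K by (simp add: phi_def)
qed

lemma phi_one_neq_one:
  assumes "cmod a < 1"
  shows "phi a 1 \<noteq> 1"
proof
  assume "phi a 1 = 1"
  moreover have "1 - cnj a \<noteq> 0"
    using mobius_denom_nonzero[of a 1] assms by simp
  ultimately have "a - 1 = 1 - cnj a"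
    by (simp add: phi_def field_simps)
  then have "Re a - 1 = 1 - Re a"
    using arg_cong[of "a - 1" "1 - cnj a" Re] by simp
  then have "Re a = 1"
    by simp
  then show False
    using complex_Re_le_cmod[of a] assms by simp
qed

lemma divide_cnj_eq_cis:
  assumes "w \<noteq> 0"
  shows "w / cnj w = cis (2 * Arg w)"
proof -
  have w: "w = of_real (cmod w) * cis (Arg w)"
    using cis_Arg[OF assms] assms by (simp add: sgn_eq)
  have cnj_w: "cnj w = of_real (cmod w) * cis (- Arg w)"
    by (subst w) (simp add: cis_cnj)
  have "w / cnj w = cis (Arg w) / cis (- Arg w)"
    using assms by (subst (1) w, subst cnj_w) simp
  also have "\<dots> = cis (2 * Arg w)"
    by (simp add: cis_divide)
  finally show ?thesis .
qed

lemma Re_one_minus_disc_pos: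
  assumes "cmod a < 1"
  shows "0 < Re (1 - a * cis t)"
proof -
  have "Re (a * cis t) \<le> cmod (a * cis t)"
    by (rule complex_Re_le_cmod)
  then show ?thesis
    using assms by (simp add: norm_mult)
qed

lemma blaschke_factor_cis:
  assumes "cmod a < 1"
  shows "(cis t - a) / (1 - cnj a * cis t) = cis (t + 2 * Arg (1 - a * cis (- t)))"
proof -
  define w where "w = 1 - a * cis (- t)"
  have "0 < Re w"
    unfolding w_def by (rule Re_one_minus_disc_pos[OF assms])
  then have "w \<noteq> 0"
    by auto
  have "cis t - a = cis t * w" "1 - cnj a * cis t = cnj w"
    unfolding w_def by (simp_all add: algebra_simps cis_mult cis_cnj)
  then have "(cis t - a) / (1 - cnj a * cis t) = cis t * (w / cnj w)"
    by simp
  also have "\<dots> = cis (t + 2 * Arg w)"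
    using \<open>w \<noteq> 0\<close> by (simp add: divide_cnj_eq_cis cis_mult)
  finally show ?thesis
    unfolding w_def .
qed

lemma blaschke_factor_eq_minus_phi: "(z - a) / (1 - cnj a * z) = - phi a z"
  by (simp add: phi_def diff_divide_distrib)

lemma circle_lift_blaschke_factor:
  assumes "a \<in> unit_disc"
  shows "circle_lift 1 (\<lambda>z. (z - a) / (1 - cnj a * z)) (\<lambda>t. t + 2 * Arg (1 - a * cis (- t)))"
proof (rule circle_liftI)
  have a: "cmod a < 1"
    using assms by (simp add: unit_disc_def)
  have "continuous_on UNIV (\<lambda>t. 1 - a * cis (- t))"
    by (intro continuous_intros)
  then have "isCont (\<lambda>t. 1 - a * cis (- t)) t" for t
    by (simp add: continuous_on_eq_continuous_at)
  moreover have "isCont Arg (1 - a * cis (- t))" for t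
    using Re_one_minus_disc_pos[OF a, of "- t"]
    by (intro continuous_at_Arg) (auto simp: complex_nonpos_Reals_iff)
  ultimately have "isCont (\<lambda>t. Arg (1 - a * cis (- t))) t" for t
    using continuous_at_compose by (fastforce simp: o_def)
  then show "continuous_on UNIV (\<lambda>t. t + 2 * Arg (1 - a * cis (- t)))"
    by (simp add: continuous_on_eq_continuous_at continuous_intros)
  show "(t + 2 * pi) + 2 * Arg (1 - a * cis (- (t + 2 * pi))) =
      (t + 2 * Arg (1 - a * cis (- t))) + 2 * pi * real 1" for t
    using cis_add_int_multiple[of "- t" "- 1"] by simp
  show "(cis t - a) / (1 - cnj a * cis t) = cis (t + 2 * Arg (1 - a * cis (- t)))" for t
    by (rule blaschke_factor_cis[OF a])
  show "inj_on (\<lambda>z. (z - a) / (1 - cnj a * z)) unit_circle"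
  proof (rule inj_onI)
    fix z w assume "z \<in> unit_circle" "w \<in> unit_circle" "(z - a) / (1 - cnj a * z) = (w - a) / (1 - cnj a * w)"
    then have "cmod z = 1" "cmod w = 1" "phi a z = phi a w"
      by (simp_all add: blaschke_factor_eq_minus_phi unit_circle_def)
    then show "z = w"
      using phi_phi[OF a] by (metis order_refl)
  qed
qed simp

lemma circle_lift_blaschke_product:
  assumes "\<And>j. j < d \<Longrightarrow> a j \<in> unit_disc" "d > 0"
  shows "\<exists>\<theta>. circle_lift d (\<lambda>z. \<Prod>j<d. (z - a j) / (1 - cnj (a j) * z)) \<theta>"
  using assms
proof (induction d)
  case (Suc d)
  obtain \<eta> where \<eta>: "circle_lift 1 (\<lambda>z. (z - a d) / (1 - cnj (a d) * z)) \<eta>"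
    using circle_lift_blaschke_factor Suc.prems(1) by blast
  show ?case
  proof (cases "d = 0")
    case True
    then show ?thesis
      using \<eta> by (intro exI[of _ \<eta>]) simp
  next
    case False
    then obtain \<theta> where "circle_lift d (\<lambda>z. \<Prod>j<d. (z - a j) / (1 - cnj (a j) * z)) \<theta>"
      using Suc by auto
    from circle_lift_mult[OF this \<eta>]
    have "circle_lift (Suc d) (\<lambda>z. \<Prod>j<Suc d. (z - a j) / (1 - cnj (a j) * z)) (\<lambda>t. \<theta> t + \<eta> t)"
      by (simp add: prod.lessThan_Suc)
    then show ?thesis
      by blast
  qed
qed simp

lemma circle_lift_blaschke:
  assumes "blaschke d B" "d > 0"
  shows "\<exists>\<theta>. circle_lift d B \<theta>"
proof -
  obtain \<gamma> a where \<gamma>: "cmod \<gamma> = 1" and "\<forall>j<d. a j \<in> unit_disc"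
    and B: "\<forall>z. cmod z \<le> 1 \<longrightarrow> B z = \<gamma> * (\<Prod>j<d. (z - a j) / (1 - cnj (a j) * z))"
    using assms(1) unfolding blaschke_def by blast
  then obtain \<theta> where "circle_lift d (\<lambda>z. \<Prod>j<d. (z - a j) / (1 - cnj (a j) * z)) \<theta>"
    using circle_lift_blaschke_product assms(2) by blast
  from circle_lift_rotate[OF \<gamma> this]
  have "circle_lift d B (\<lambda>t. \<theta> t + Arg \<gamma>)"
    by (rule circle_lift_cong) (use B in \<open>simp add: unit_circle_def\<close>)
  then show ?thesis
    by blast
qed

lemma circle_lift_chain:
  assumes "\<And>i. 1 \<le> i \<Longrightarrow> i \<le> k \<Longrightarrow> blaschke m (C i)" "m > 0"
  shows "\<exists>\<theta>. circle_lift (m ^ k) (chain C k) \<theta>"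
  using assms(1)
proof (induction k)
  case 0
  have "circle_lift (m ^ 0) (chain C 0) id"
    by (simp only: power_0 chain.simps circle_lift_id)
  then show ?case
    by blast
next
  case (Suc k)
  then obtain \<theta> where \<theta>: "circle_lift (m ^ k) (chain C k) \<theta>"
    by auto
  have "blaschke m (C (Suc k))"
    using Suc.prems by simp
  then obtain \<eta> where \<eta>: "circle_lift m (C (Suc k)) \<eta>"
    using circle_lift_blaschke assms(2) by blast
  from circle_lift_comp[OF \<theta> \<eta>]
  have "circle_lift (m ^ Suc k) (chain C (Suc k)) (\<eta> \<circ> \<theta>)"
    by (simp only: power_Suc2 chain.simps)
  then show ?case
    by blast
qed

section \<open>The invariant groups of the partial compositions\<close>

lemma carrier_inv_group [simp]: "carrier (inv_group F) = invariants F"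
  by (simp add: inv_group_def)

lemma invariants_cong:
  assumes "\<And>z. z \<in> unit_circle \<Longrightarrow> F z = G z"
  shows "invariants F = invariants G"
  using assms unfolding invariants_def by auto

lemma invariants_subset_comp: "invariants F \<subseteq> invariants (G \<circ> F)"
  unfolding invariants_def by auto

lemma invariants_chain_mono:
  assumes "j \<le> k"
  shows "invariants (chain C j) \<subseteq> invariants (chain C k)"
  using assms
proof (induction k rule: dec_induct)
  case (step k)
  have "invariants (chain C (Suc k)) = invariants (C (Suc k) \<circ> chain C k)"
    by (simp only: chain.simps)
  then show ?case
    using invariants_subset_comp[of "chain C k" "C (Suc k)"] step.IH by blast
qed simp

lemma invariants_normal_index:
  assumes F: "circle_lift d F \<theta>" and GF: "circle_lift (d * e) (G \<circ> F) \<eta>"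
  shows "invariants F \<lhd> inv_group (G \<circ> F)"
    and "card (rcosets\<^bsub>inv_group (G \<circ> F)\<^esub> invariants F) = e"
proof -
  interpret F: circle_covering d F \<theta> by (rule circle_covering.intro[OF F])
  interpret GF: circle_covering "d * e" "G \<circ> F" \<eta> by (rule circle_covering.intro[OF GF])
  interpret comm_group "inv_group (G \<circ> F)" by (rule GF.comm_group_inv_group)
  have "inv_group (G \<circ> F)\<lparr>carrier := invariants F\<rparr> = inv_group F"
    by (simp add: inv_group_def)
  then have sub: "subgroup (invariants F) (inv_group (G \<circ> F))"
    using invariants_subset_comp F.comm_group_inv_group
    by (intro group_incl_imp_subgroup) (simp_all add: comm_group.axioms(2))
  then show "invariants F \<lhd> inv_group (G \<circ> F)"
    by (rule subgroup_imp_normal)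
  have "card (rcosets\<^bsub>inv_group (G \<circ> F)\<^esub> invariants F) * card (invariants F) = Coset.order (inv_group (G \<circ> F))"
    by (rule lagrange[OF sub])
  then show "card (rcosets\<^bsub>inv_group (G \<circ> F)\<^esub> invariants F) = e"
    using F.card_invariants GF.card_invariants F.degree_pos by (simp add: Coset.order_def)
qed

lemma chain_invariants_normal_index:
  assumes "\<And>i. 1 \<le> i \<Longrightarrow> i \<le> Suc j \<Longrightarrow> blaschke m (C i)" "m > 0"
  shows "invariants (chain C j) \<lhd> inv_group (chain C (Suc j))"
    and "card (rcosets\<^bsub>inv_group (chain C (Suc j))\<^esub> invariants (chain C j)) = m"
proof -
  have "\<exists>\<theta>. circle_lift (m ^ j) (chain C j) \<theta>"
    by (rule circle_lift_chain) (simp_all add: assms)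
  then obtain \<theta> where \<theta>: "circle_lift (m ^ j) (chain C j) \<theta>" ..
  have "\<exists>\<eta>. circle_lift (m ^ Suc j) (chain C (Suc j)) \<eta>"
    by (rule circle_lift_chain) (simp_all add: assms)
  then obtain \<eta> where \<eta>: "circle_lift (m ^ j * m) (C (Suc j) \<circ> chain C j) \<eta>"
    unfolding power_Suc2 chain.simps ..
  from invariants_normal_index[OF \<theta> \<eta>]
  show "invariants (chain C j) \<lhd> inv_group (chain C (Suc j))"
    and "card (rcosets\<^bsub>inv_group (chain C (Suc j))\<^esub> invariants (chain C j)) = m"
    by simp_all
qed

lemma blaschke_generator_pow_eq_involution:
  assumes "blaschke (2 * p) B" "p > 0" "g \<in> invariants B" "generate (inv_group B) {g} = invariants B"
    and "u \<in> invariants B" "u \<circ> u = id" "u \<noteq> id"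
  shows "g ^^ p = u"
proof -
  have "\<exists>\<theta>. circle_lift (2 * p) B \<theta>"
    by (rule circle_lift_blaschke[OF assms(1)]) (use assms(2) in simp)
  then obtain \<theta> where "circle_lift (2 * p) B \<theta>" ..
  then interpret circle_covering "2 * p" B \<theta>
    by (rule circle_covering.intro)
  show ?thesis
    using generator_pow_half[OF refl assms(3,4)] involution_eq_deck_half[OF refl assms(5-7)] by simp
qed

definition circle_restrict :: "(complex \<Rightarrow> complex) \<Rightarrow> complex \<Rightarrow> complex" where
  "circle_restrict f z = (if z \<in> unit_circle then f z else z)"

lemma circle_restrict_phi_in_invariants:
  assumes a: "a \<in> unit_disc" and C: "\<And>z. cmod z \<le> 1 \<Longrightarrow> C z = z * phi a z"
  shows "circle_restrict (phi a) \<in> invariants C"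
proof -
  have a1: "cmod a < 1"
    using a by (simp add: unit_disc_def)
  have "continuous_on unit_circle (\<lambda>z. (a - z) / (1 - cnj a * z))"
    using mobius_denom_nonzero[OF a1] by (intro continuous_intros) (auto simp: unit_circle_def)
  then have "continuous_on unit_circle (circle_restrict (phi a))"
    by (rule continuous_on_cong[THEN iffD1, rotated 2]) (auto simp: circle_restrict_def phi_def)
  moreover have "C (phi a z) = C z" if "z \<in> unit_circle" for z
  proof -
    have "cmod z = 1" "cmod (phi a z) = 1"
      using that norm_phi[OF a1] by (auto simp: unit_circle_def)
    then show ?thesis
      using C phi_phi[OF a1] by (simp add: mult.commute)
  qed
  ultimately show ?thesis
    using norm_phi[OF a1] unfolding invariants_def by (auto simp: circle_restrict_def unit_circle_def)
qed

lemma circle_restrict_phi_involution: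
  assumes "a \<in> unit_disc"
  shows "circle_restrict (phi a) \<circ> circle_restrict (phi a) = id"
proof
  fix z
  show "(circle_restrict (phi a) \<circ> circle_restrict (phi a)) z = id z"
    using assms norm_phi phi_phi by (auto simp: circle_restrict_def unit_circle_def unit_disc_def)
qed

lemma circle_restrict_phi_neq_id:
  assumes "a \<in> unit_disc"
  shows "circle_restrict (phi a) \<noteq> id"
proof
  assume "circle_restrict (phi a) = id"
  then have "phi a 1 = 1"
    by (metis circle_restrict_def cis_in_unit_circle cis_zero id_apply)
  then show False
    using phi_one_neq_one assms by (simp add: unit_disc_def)
qed

theorem theorem6p2:
  fixes n :: nat and B :: "complex \<Rightarrow> complex" and C :: "nat \<Rightarrow> complex \<Rightarrow> complex"
    and g :: "complex \<Rightarrow> complex"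
  assumes "n \<ge> 1"
    and "blaschke (2 ^ n) B"
    and "g \<in> carrier (inv_group B)"
    and "generate (inv_group B) {g} = carrier (inv_group B)"
    and "\<forall>j\<in>{1..n}. blaschke 2 (C j)"
    and "\<forall>z. cmod z \<le> 1 \<longrightarrow> B z = chain C n z"
  shows "(\<forall>j\<in>{1..n-1}.
            carrier (inv_group (chain C j)) \<lhd> inv_group (chain C (Suc j)) \<and>
            card (rcosets\<^bsub>inv_group (chain C (Suc j))\<^esub> carrier (inv_group (chain C j))) = 2)
      \<and> (\<forall>a. a \<in> unit_disc \<longrightarrow> (\<forall>z. cmod z \<le> 1 \<longrightarrow> C 1 z = z * ((a - z) / (1 - cnj a * z)))
            \<longrightarrow> (\<forall>z\<in>unit_circle. (g ^^ (2 ^ (n - 1))) z = phi a z))"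
proof (intro conjI ballI allI impI)
  fix j assume "j \<in> {1..n-1}"
  then have "\<And>i. 1 \<le> i \<Longrightarrow> i \<le> Suc j \<Longrightarrow> blaschke 2 (C i)"
    using assms(5) by auto
  from chain_invariants_normal_index[OF this]
  show "carrier (inv_group (chain C j)) \<lhd> inv_group (chain C (Suc j))"
    and "card (rcosets\<^bsub>inv_group (chain C (Suc j))\<^esub> carrier (inv_group (chain C j))) = 2"
    by simp_all
next
  fix a z
  assume a: "a \<in> unit_disc" and C1: "\<forall>z. cmod z \<le> 1 \<longrightarrow> C 1 z = z * ((a - z) / (1 - cnj a * z))"
    and "z \<in> unit_circle"
  have "circle_restrict (phi a) \<in> invariants (chain C 1)"
    using circle_restrict_phi_in_invariants[OF a, of "chain C 1"] C1 by (simp add: phi_def)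
  also have "\<dots> \<subseteq> invariants (chain C n)"
    using invariants_chain_mono assms(1) by blast
  also have "\<dots> = invariants B"
    using invariants_cong[of "chain C n" B] assms(6) by (simp add: unit_circle_def)
  finally have "circle_restrict (phi a) \<in> invariants B" .
  moreover have "blaschke (2 * 2 ^ (n - 1)) B"
    using assms(1,2) by (simp flip: power_Suc)
  ultimately have "g ^^ 2 ^ (n - 1) = circle_restrict (phi a)"
    using assms(3,4) circle_restrict_phi_involution[OF a] circle_restrict_phi_neq_id[OF a]
    by (intro blaschke_generator_pow_eq_involution) simp_all
  then show "(g ^^ 2 ^ (n - 1)) z = phi a z"
    using \<open>z \<in> unit_circle\<close> by (simp add: circle_restrict_def)
qed

end
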